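(* Let $a,b,c$ be positive integers and let $G$ be a graph whose rank cardinality vector is $(a,b,c,1)$. Then some vertex of corner rank 3 or 4 is adjacent to every vertex of corner rank 2.
   Context: All graphs are finite, nonempty, and reflexive (every vertex has a loop). $N[v]$ is the closed neighborhood of $v$ (including $v$). For distinct $v,w$, $w$ strictly corners $v$ if $N[v]\subsetneq N[w]$; $v$ is then a strict corner. Corner ranking: set $G^{(1)}=G$, $k=1$. If $G^{(k)}$ is a clique, give all its vertices rank $k$ and stop. Else if $G^{(k)}$ has no strict corners, give all its vertices rank $\infty$ and stop. Else give every strict corner of $G^{(k)}$ rank $k$, delete them to get $G^{(k+1)}$ (induced subgraph), increase $k$ and repeat. The corner rank is the largest rank of a vertex; $X_k$ is the set of rank-$k$ vertices. The rank cardinality vector of a graph of finite corner rank $\alpha$ is $(x_\alpha,\dots,x_1)$ with $x_k=|X_k|$. *)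

theory Defs
  imports Main
begin

definition refl_graph :: "'a set \<Rightarrow> ('a \<Rightarrow> 'a \<Rightarrow> bool) \<Rightarrow> bool" where
  "refl_graph V E \<longleftrightarrow> finite V \<and> V \<noteq> {} \<and> (\<forall>v\<in>V. E v v) \<and>
     (\<forall>v\<in>V. \<forall>w\<in>V. E v w \<longleftrightarrow> E w v)"

definition cnbhd :: "('a \<Rightarrow> 'a \<Rightarrow> bool) \<Rightarrow> 'a set \<Rightarrow> 'a \<Rightarrow> 'a set" where
  "cnbhd E S v = {w \<in> S. E v w}"

definition strict_corners :: "('a \<Rightarrow> 'a \<Rightarrow> bool) \<Rightarrow> 'a set \<Rightarrow> 'a set" where
  "strict_corners E S = {v \<in> S. \<exists>w\<in>S. w \<noteq> v \<and> cnbhd E S v \<subset> cnbhd E S w}"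

definition is_clique :: "('a \<Rightarrow> 'a \<Rightarrow> bool) \<Rightarrow> 'a set \<Rightarrow> bool" where
  "is_clique E S \<longleftrightarrow> (\<forall>v\<in>S. \<forall>w\<in>S. E v w)"

text \<open>stage0 E V k is the vertex set of G^(k+1).\<close>
primrec stage0 :: "('a \<Rightarrow> 'a \<Rightarrow> bool) \<Rightarrow> 'a set \<Rightarrow> nat \<Rightarrow> 'a set" where
  "stage0 E V 0 = V"
| "stage0 E V (Suc k) = stage0 E V k - strict_corners E (stage0 E V k)"

text \<open>Vertex set of G^(k), for k \<ge> 1.\<close>
definition Gk :: "('a \<Rightarrow> 'a \<Rightarrow> bool) \<Rightarrow> 'a set \<Rightarrow> nat \<Rightarrow> 'a set" where
  "Gk E V k = stage0 E V (k - 1)"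

definition has_corner_rank :: "'a set \<Rightarrow> ('a \<Rightarrow> 'a \<Rightarrow> bool) \<Rightarrow> nat \<Rightarrow> bool" where
  "has_corner_rank V E \<alpha> \<longleftrightarrow> 1 \<le> \<alpha> \<and> is_clique E (Gk E V \<alpha>) \<and>
     (\<forall>k. 1 \<le> k \<and> k < \<alpha> \<longrightarrow> \<not> is_clique E (Gk E V k) \<and> strict_corners E (Gk E V k) \<noteq> {})"

definition rank_set :: "'a set \<Rightarrow> ('a \<Rightarrow> 'a \<Rightarrow> bool) \<Rightarrow> nat \<Rightarrow> nat \<Rightarrow> 'a set" where
  "rank_set V E \<alpha> k = (if k = \<alpha> then Gk E V \<alpha> else strict_corners E (Gk E V k))"

definition rank_card_vector :: "'a set \<Rightarrow> ('a \<Rightarrow> 'a \<Rightarrow> bool) \<Rightarrow> nat \<Rightarrow> nat list" where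
  "rank_card_vector V E \<alpha> = map (\<lambda>k. card (rank_set V E \<alpha> k)) (rev [1..<\<alpha>+1])"

end

theory Submission
  imports Defs
begin

text \<open>Let u be the unique rank-1 vertex, cornered by w. If x is strictly cornered by y in
  G - u, then y does not strictly corner x in G, which forces x \<sim> u and y \<not>\<sim> u. Hence every
  rank-2 vertex is adjacent to u, so lies in N[u] \<subseteq> N[w]. If w itself has rank 2, the
  vertex y cornering it in G - u is not adjacent to u, so it has rank at least 3, and
  N[w] \<subseteq> N[y] makes y adjacent to all rank-2 vertices as well.\<close>

lemma cnbhd_remove_vertex:
  assumes "u \<in> S"
  shows "cnbhd E S x = cnbhd E (S - {u}) x \<union> (if E x u then {u} else {})"
  using assms unfolding cnbhd_def by auto

lemma strict_corner_after_removal: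
  assumes corners: "strict_corners E S \<subseteq> {u}" and "u \<in> S"
    and "x \<in> S - {u}" "y \<in> S - {u}" "x \<noteq> y"
    and sub: "cnbhd E (S - {u}) x \<subset> cnbhd E (S - {u}) y"
  shows "E x u \<and> \<not> E y u"
proof -
  have "x \<notin> strict_corners E S" using corners \<open>x \<in> S - {u}\<close> by blast
  hence "\<not> cnbhd E S x \<subset> cnbhd E S y"
    using assms(3-5) unfolding strict_corners_def by (metis (mono_tags, lifting) DiffD1 mem_Collect_eq)
  moreover have "u \<notin> cnbhd E (S - {u}) x" "u \<notin> cnbhd E (S - {u}) y"
    unfolding cnbhd_def by blast+
  ultimately show ?thesis
    using cnbhd_remove_vertex[OF \<open>u \<in> S\<close>, of E x] cnbhd_remove_vertex[OF \<open>u \<in> S\<close>, of E y] sub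
    by (auto split: if_splits)
qed

lemma dominating_vertex_after_unique_corner:
  assumes sym: "\<forall>v\<in>S. \<forall>w\<in>S. E v w \<longleftrightarrow> E w v"
    and unique: "strict_corners E S = {u}"
  defines "X \<equiv> strict_corners E (S - {u})"
  shows "\<exists>v \<in> (S - {u}) - X. \<forall>x\<in>X. E v x"
proof -
  have uS: "u \<in> S" using unique unfolding strict_corners_def by blast
  have XS: "X \<subseteq> S - {u}" unfolding X_def strict_corners_def by blast
  have X_adj_u: "E x u" if xX: "x \<in> X" for x
  proof -
    obtain y where "x \<in> S - {u}" "y \<in> S - {u}" "y \<noteq> x"
      "cnbhd E (S - {u}) x \<subset> cnbhd E (S - {u}) y"
      using xX unfolding X_def strict_corners_def by blast
    thus ?thesis using strict_corner_after_removal[OF equalityD1[OF unique] uS] by blast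
  qed
  obtain w where w: "w \<in> S - {u}" "cnbhd E S u \<subset> cnbhd E S w"
    using unique unfolding strict_corners_def by blast
  have w_adj: "E w x" if "x \<in> X" for x
  proof -
    have "x \<in> cnbhd E S u"
      using X_adj_u[OF that] sym uS XS that unfolding cnbhd_def by blast
    thus ?thesis using w(2) unfolding cnbhd_def by blast
  qed
  show ?thesis
  proof (cases "w \<in> X")
    case False
    thus ?thesis using w(1) w_adj by blast
  next
    case True
    then obtain y where y: "y \<in> S - {u}" "y \<noteq> w"
      "cnbhd E (S - {u}) w \<subset> cnbhd E (S - {u}) y"
      unfolding X_def strict_corners_def by blast
    have "\<not> E y u"
      using strict_corner_after_removal[OF equalityD1[OF unique] uS w(1) y(1) y(2)[symmetric] y(3)]
      by blast
    hence "y \<notin> X" using X_adj_u by blast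
    moreover have "E y x" if "x \<in> X" for x
    proof -
      have "x \<in> cnbhd E (S - {u}) w" using w_adj[OF that] that XS unfolding cnbhd_def by blast
      thus ?thesis using y(3) unfolding cnbhd_def by blast
    qed
    ultimately show ?thesis using y(1) by blast
  qed
qed

lemma Gk_Suc: "1 \<le> k \<Longrightarrow> Gk E V (Suc k) = Gk E V k - strict_corners E (Gk E V k)"
  unfolding Gk_def by (metis Suc_diff_le diff_Suc_1 stage0.simps(2))

lemma rank_set_below: "k \<noteq> \<alpha> \<Longrightarrow> rank_set V E \<alpha> k = strict_corners E (Gk E V k)"
  by (simp add: rank_set_def)

lemma rank_set_pred_Un_top:
  assumes "2 \<le> \<alpha>"
  shows "rank_set V E \<alpha> (\<alpha> - 1) \<union> rank_set V E \<alpha> \<alpha> = Gk E V (\<alpha> - 1)"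
proof -
  have "Gk E V \<alpha> = Gk E V (\<alpha> - 1) - strict_corners E (Gk E V (\<alpha> - 1))"
    using Gk_Suc[of "\<alpha> - 1" E V] assms by (simp add: Suc_diff_le)
  moreover have "strict_corners E (Gk E V (\<alpha> - 1)) \<subseteq> Gk E V (\<alpha> - 1)"
    unfolding strict_corners_def by blast
  moreover have "\<alpha> - 1 \<noteq> \<alpha>" using assms by simp
  ultimately show ?thesis unfolding rank_set_def by (simp add: Un_absorb1)
qed

lemma length_rank_card_vector: "length (rank_card_vector V E \<alpha>) = \<alpha>"
  by (simp add: rank_card_vector_def)

lemma last_rank_card_vector:
  "1 \<le> \<alpha> \<Longrightarrow> last (rank_card_vector V E \<alpha>) = card (rank_set V E \<alpha> 1)"
  by (simp add: rank_card_vector_def last_map last_rev)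

theorem lemma3p23:
  fixes V :: "'a set" and E :: "'a \<Rightarrow> 'a \<Rightarrow> bool" and \<alpha> a b c :: nat
  assumes "refl_graph V E"
    and "has_corner_rank V E \<alpha>"
    and "rank_card_vector V E \<alpha> = [a, b, c, 1]"
    and "0 < a" and "0 < b" and "0 < c"
  shows "\<exists>v \<in> rank_set V E \<alpha> 3 \<union> rank_set V E \<alpha> 4.
           \<forall>w \<in> rank_set V E \<alpha> 2. E v w"
proof -
  \<comment> \<open>Only the length and last entry of the rank cardinality vector are needed.\<close>
  have \<alpha>: "\<alpha> = 4" using length_rank_card_vector[of V E \<alpha>] assms(3) by simp
  have "card (strict_corners E V) = 1"
    using last_rank_card_vector[of \<alpha> V E] assms(3) \<alpha> by (simp add: rank_set_below Gk_def)
  then obtain u where u: "strict_corners E V = {u}" by (meson card_1_singletonE)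
  have sym: "\<forall>v\<in>V. \<forall>w\<in>V. E v w \<longleftrightarrow> E w v" using assms(1) unfolding refl_graph_def by blast
  have G2: "Gk E V 2 = V - {u}" using Gk_Suc[of 1 E V] u by (simp add: numeral_2_eq_2 Gk_def)
  have X2: "rank_set V E \<alpha> 2 = strict_corners E (V - {u})"
    using G2 \<alpha> by (simp add: rank_set_below)
  have "rank_set V E \<alpha> 3 \<union> rank_set V E \<alpha> 4 = Gk E V 3"
    using rank_set_pred_Un_top[of 4 V E] \<alpha> by simp
  also have "\<dots> = (V - {u}) - strict_corners E (V - {u})"
    using Gk_Suc[of 2 E V] G2 by (simp add: numeral_3_eq_3 numeral_2_eq_2)
  finally show ?thesis
    using dominating_vertex_after_unique_corner[OF sym u] X2 by simp
qed

end
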